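(* Let $d \geq 3$. Then the morphism \[\mathbb{P}^1\times\mathbb{P}^1 \to \mathbb{P}^4,\quad [x_0:x_1]\times[y_0:y_1] \mapsto \Big[x_0y_0^d : d x_0y_0^{d-1}y_1 + x_1y_0^d : \tbinom{d}{2}x_0y_0^{d-2}y_1^2 + d x_1y_0^{d-1}y_1 : x_0y_1^d + d x_1y_0y_1^{d-1} : x_1y_1^d\Big]\] is injective. In particular, $\operatorname{injdim}(\mathbb{P}^1\times\mathbb{P}^1,\mathcal{O}(1,d)) \leq 4$.
   Context: Over $\mathbb{C}$. For a line bundle $\mathscr{L}$ on a projective variety $X$ and a nonzero subspace $V \subseteq H^0(X,\mathscr{L})$, $\varphi_V \colon X \dashrightarrow \mathbb{P}(V^* )$ is the rational map given by the sections in $V$; $\operatorname{injdim}(X,\mathscr{L}) := \inf\{\dim V - 1 : \varphi_V \text{ is an injective morphism}\}$. *)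

theory Defs
  imports Complex_Main
begin

text \<open>Points of projective space P^n over C are represented by nonzero coordinate
vectors (lists of length n+1); two vectors represent the same point iff they are
proportional by a nonzero scalar.\<close>

definition proj_eq :: "complex list \<Rightarrow> complex list \<Rightarrow> bool" where
  "proj_eq u v \<longleftrightarrow> (\<exists>c. c \<noteq> 0 \<and> v = map (\<lambda>t. c * t) u)"

definition nonzero_vec :: "complex list \<Rightarrow> bool" where
  "nonzero_vec u \<longleftrightarrow> (\<exists>t \<in> set u. t \<noteq> 0)"

definition phi_map :: "nat \<Rightarrow> complex list \<Rightarrow> complex list \<Rightarrow> complex list" where
  "phi_map d x y =
    (let x0 = x ! 0; x1 = x ! 1; y0 = y ! 0; y1 = y ! 1 in
     [ x0 * y0 ^ d,
       of_nat d * x0 * y0 ^ (d - 1) * y1 + x1 * y0 ^ d,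
       of_nat (d choose 2) * x0 * y0 ^ (d - 2) * y1 ^ 2 + of_nat d * x1 * y0 ^ (d - 1) * y1,
       x0 * y1 ^ d + of_nat d * x1 * y0 * y1 ^ (d - 1),
       x1 * y1 ^ d ])"

end

theory Submission
  imports Defs
begin

(* On the chart y = [1 : u] the map is x \<mapsto> x0 v(u) + x1 w(u) with
   v(u) = (1, d u, C(d,2) u^2, u^d, 0) and w(u) = (0, 1, d u, d u^(d-1), u^d).
   The lines y0 = 0 and y1 = 0 are recognised by the vanishing of the coordinates 0, 1
   resp. 3, 4, and on them the map is just x \<mapsto> y_i^d x.  In the chart, the first three
   coordinates of two equal images with u \<noteq> u' force 2 x1 = x0 ((d+1) u' - (d-1) u);
   the last two coordinates then eliminate to d (d^2 - 1) (u - u')^3 = 0. *)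

(* Coordinates 1 to 4 of two equal images in the chart, after coordinate 0 has identified
   the x0's; D = d, C = C(d,2), P = u^(d-1), P' = u'^(d-1). *)
lemma tangent_chart_equations_imp_eq:
  fixes a b b' u u' D C P P' :: complex
  assumes C: "2 * C = D * (D - 1)" and D: "D \<noteq> 0" "D * D \<noteq> 1"
    and ab: "a \<noteq> 0 \<or> b \<noteq> 0" and P: "P \<noteq> 0" "P' \<noteq> 0"
    and e1: "D * a * u' + b' = D * a * u + b"
    and e2: "C * a * u'^2 + D * b' * u' = C * a * u^2 + D * b * u"
    and e3: "(a * u' + D * b') * P' = (a * u + D * b) * P"
    and e4: "b' * u' * P' = b * u * P"
  shows "u' = u"
proof (rule ccontr)
  assume ne: "u' \<noteq> u"
  \<comment> \<open>\<open>e1\<close>, \<open>e2\<close> force \<open>a Y = 2 b\<close> and \<open>a X = 2 b'\<close>;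
    eliminating \<open>P\<close>, \<open>P'\<close> from \<open>e3\<close>, \<open>e4\<close> then leaves a cubic in \<open>u - u'\<close>\<close>
  define X where "X = (D + 1) * u - (D - 1) * u'"
  define Y where "Y = (D + 1) * u' - (D - 1) * u"
  have b': "b' = b + D * a * (u - u')" using e1 by (simp add: algebra_simps)
  have "2 * (C * a * u'^2 + D * b' * u') - 2 * (C * a * u^2 + D * b * u)
      = (u' - u) * ((2 * C) * a * (u' + u) + 2 * D * b - 2 * D * D * a * u')"
    unfolding b' by (simp add: algebra_simps power2_eq_square)
  also have "\<dots> = (u' - u) * D * (2 * b - a * Y)"
    unfolding C Y_def by (simp add: algebra_simps)
  finally have "(u' - u) * D * (2 * b - a * Y) = 0" using e2 by simp
  then have aY: "a * Y = 2 * b" using ne D by simp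
  have aX: "a * X = 2 * b'"
    using aY unfolding b' X_def Y_def by (simp add: algebra_simps)
  have a: "a \<noteq> 0" using ab aY by auto
  have "a * (X * u' * P') = 2 * (b' * u' * P')" "a * (Y * u * P) = 2 * (b * u * P)"
    using aX aY by (simp_all only: mult.assoc[symmetric])
  then have "a * (X * u' * P') = a * (Y * u * P)" using e4 by metis
  then have f4: "X * u' * P' = Y * u * P" using a by simp
  have "a * ((2 * u' + D * X) * P') = 2 * ((a * u' + D * b') * P')"
    "a * ((2 * u + D * Y) * P) = 2 * ((a * u + D * b) * P)"
    using aX aY by (simp_all add: algebra_simps)
  then have "a * ((2 * u' + D * X) * P') = a * ((2 * u + D * Y) * P)" using e3 by metis
  then have f3: "(2 * u' + D * X) * P' = (2 * u + D * Y) * P" using a by simp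
  have "X * u' * P' * ((2 * u + D * Y) * P) = Y * u * P * ((2 * u' + D * X) * P')"
    using f3 f4 by simp
  then have "(X * u' * (2 * u + D * Y) - Y * u * (2 * u' + D * X)) * (P * P') = 0"
    by (simp add: algebra_simps)
  moreover have "X * u' * (2 * u + D * Y) - Y * u * (2 * u' + D * X)
      = D * (D * D - 1) * (u - u')^3"
    unfolding X_def Y_def by (simp add: algebra_simps power3_eq_cube)
  ultimately show False using D P ne by simp
qed

lemma length_2_cases:
  assumes "length xs = 2"
  obtains a b where "xs = [a, b]"
  using assms by (auto simp: numeral_2_eq_2 length_Suc_conv)

lemma nonzero_vec_pair [simp]: "nonzero_vec [a, b] \<longleftrightarrow> a \<noteq> 0 \<or> b \<noteq> 0"
  by (auto simp: nonzero_vec_def)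

lemma proj_eq_pairI: "k \<noteq> 0 \<Longrightarrow> a' = k * a \<Longrightarrow> b' = k * b \<Longrightarrow> proj_eq [a, b] [a', b']"
  by (auto simp: proj_eq_def)

lemma two_times_choose_two:
  "2 * (of_nat (n choose 2) :: 'a :: comm_ring_1) = of_nat n * (of_nat n - 1)"
proof (cases n)
  case (Suc m)
  have "2 * (Suc m choose 2) = Suc m * m" by (simp add: choose_two)
  then have "(of_nat (2 * (Suc m choose 2)) :: 'a) = of_nat (Suc m * m)" by (rule arg_cong)
  then show ?thesis using Suc by (simp add: algebra_simps)
qed (simp add: choose_two)

lemma length_phi_map [simp]: "length (phi_map d x y) = 5"
  by (simp add: phi_map_def Let_def)

lemma phi_map_scale_left:
  "phi_map d [k * a, k * b] y = map ((*) k) (phi_map d [a, b] y)"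
  by (simp add: phi_map_def Let_def algebra_simps)

lemma phi_map_dehomogenize:
  assumes "d \<ge> 2"
  shows "phi_map d x [s, s * u] = map ((*) (s ^ d)) (phi_map d x [1, u])"
proof -
  obtain m where "d = m + 2" using assms le_Suc_ex by (metis add.commute)
  then show ?thesis
    by (simp add: phi_map_def Let_def power_mult_distrib power2_eq_square algebra_simps)
qed

lemma phi_map_y0_zero:
  assumes "d \<ge> 3"
  shows "phi_map d [a, b] [0, t] = [0, 0, 0, a * t ^ d, b * t ^ d]"
  using assms by (simp add: phi_map_def power_0_left)

lemma phi_map_y1_zero:
  assumes "d \<ge> 3"
  shows "phi_map d [a, b] [s, 0] = [a * s ^ d, b * s ^ d, 0, 0, 0]"
  using assms by (simp add: phi_map_def power_0_left)

lemma phi_map_y0_eq_0_iff: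
  assumes "d \<ge> 3" "a \<noteq> 0 \<or> b \<noteq> 0"
  shows "s = 0 \<longleftrightarrow> phi_map d [a, b] [s, t] ! 0 = 0 \<and> phi_map d [a, b] [s, t] ! 1 = 0"
proof
  assume "s = 0"
  then show "phi_map d [a, b] [s, t] ! 0 = 0 \<and> phi_map d [a, b] [s, t] ! 1 = 0"
    using phi_map_y0_zero[OF assms(1)] by simp
next
  assume vanish: "phi_map d [a, b] [s, t] ! 0 = 0 \<and> phi_map d [a, b] [s, t] ! 1 = 0"
  show "s = 0"
  proof (rule ccontr)
    assume "s \<noteq> 0"
    moreover from vanish have "a * s ^ d = 0" by (simp add: phi_map_def)
    ultimately have "a = 0" by simp
    with vanish have "b * s ^ d = 0" by (simp add: phi_map_def)
    with \<open>a = 0\<close> \<open>s \<noteq> 0\<close> assms(2) show False by simp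
  qed
qed

lemma phi_map_y1_eq_0_iff:
  assumes "d \<ge> 3" "a \<noteq> 0 \<or> b \<noteq> 0"
  shows "t = 0 \<longleftrightarrow> phi_map d [a, b] [s, t] ! 3 = 0 \<and> phi_map d [a, b] [s, t] ! 4 = 0"
proof
  assume "t = 0"
  then show "phi_map d [a, b] [s, t] ! 3 = 0 \<and> phi_map d [a, b] [s, t] ! 4 = 0"
    using phi_map_y1_zero[OF assms(1)] by simp
next
  assume vanish: "phi_map d [a, b] [s, t] ! 3 = 0 \<and> phi_map d [a, b] [s, t] ! 4 = 0"
  show "t = 0"
  proof (rule ccontr)
    assume "t \<noteq> 0"
    moreover from vanish have "b * t ^ d = 0" by (simp add: phi_map_def)
    ultimately have "b = 0" by simp
    with vanish have "a * t ^ d = 0" by (simp add: phi_map_def)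
    with \<open>b = 0\<close> \<open>t \<noteq> 0\<close> assms(2) show False by simp
  qed
qed

lemma phi_map_affine_eq_imp_eq:
  assumes d: "d \<ge> 3" and ab: "a \<noteq> 0 \<or> b \<noteq> 0" and u: "u \<noteq> 0" "u' \<noteq> 0"
    and eq: "phi_map d [a', b'] [1, u'] = phi_map d [a, b] [1, u]"
  shows "u' = u \<and> a' = a \<and> b' = b"
proof -
  define D where "D = (of_nat d :: complex)"
  define C where "C = (of_nat (d choose 2) :: complex)"
  have "a' = a \<and> D * a' * u' + b' = D * a * u + b
      \<and> C * a' * u'^2 + D * b' * u' = C * a * u^2 + D * b * u
      \<and> a' * u' ^ d + D * b' * u' ^ (d - 1) = a * u ^ d + D * b * u ^ (d - 1)
      \<and> b' * u' ^ d = b * u ^ d"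
    using eq unfolding phi_map_def D_def C_def by (simp (no_asm_use))
  then have a': "a' = a"
    and e1: "D * a * u' + b' = D * a * u + b"
    and e2: "C * a * u'^2 + D * b' * u' = C * a * u^2 + D * b * u"
    and e3: "a * u' ^ d + D * b' * u' ^ (d - 1) = a * u ^ d + D * b * u ^ (d - 1)"
    and e4: "b' * u' ^ d = b * u ^ d"
    by blast+
  have pow: "z ^ d = z * z ^ (d - 1)" for z :: complex using d by (cases d) simp_all
  have e3: "(a * u' + D * b') * u' ^ (d - 1) = (a * u + D * b) * u ^ (d - 1)"
    using e3 unfolding pow by (simp add: algebra_simps)
  have e4: "b' * u' * u' ^ (d - 1) = b * u * u ^ (d - 1)"
    using e4 unfolding pow by (simp add: algebra_simps)
  have "d * d \<noteq> 1" using d by simp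
  then have D: "D \<noteq> 0" "D * D \<noteq> 1"
    unfolding D_def using d by (simp, metis of_nat_1 of_nat_eq_iff of_nat_mult)
  have C: "2 * C = D * (D - 1)" unfolding C_def D_def by (rule two_times_choose_two)
  have "u' = u"
    using u by (intro tangent_chart_equations_imp_eq[OF C D ab _ _ e1 e2 e3 e4]) simp_all
  with a' e1 show ?thesis by simp
qed

lemma proj_eq_pair_if_scaled:
  assumes "c \<noteq> 0" "p \<noteq> 0" "p' \<noteq> 0" "a' * p' = c * (a * p)" "b' * p' = c * (b * p)"
  shows "proj_eq [a, b] [a', b']"
  using assms by (intro proj_eq_pairI[of "c * p / p'"]) (simp_all add: field_simps)

lemma phi_map_proportional_off_axes:
  assumes d: "d \<ge> 3" and x: "a \<noteq> 0 \<or> b \<noteq> 0" and c: "c \<noteq> 0"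
    and y: "s \<noteq> 0" "t \<noteq> 0" and y': "s' \<noteq> 0" "t' \<noteq> 0"
    and eq: "phi_map d [a', b'] [s', t'] = map ((*) c) (phi_map d [a, b] [s, t])"
  shows "proj_eq [a, b] [a', b'] \<and> proj_eq [s, t] [s', t']"
proof -
  define u u' k where "u = t / s" and "u' = t' / s'" and "k = c * s ^ d / s' ^ d"
  have st: "t = s * u" "t' = s' * u'" using y y' by (simp_all add: u_def u'_def)
  have u: "u \<noteq> 0" "u' \<noteq> 0" using y y' st by auto
  have k: "k \<noteq> 0" using c y y' by (simp add: k_def)
  have ks: "s' ^ d * k = c * s ^ d" using y' by (simp add: k_def)
  have "map ((*) (s' ^ d)) (phi_map d [a', b'] [1, u']) = phi_map d [a', b'] [s', t']"
    using d by (simp add: st phi_map_dehomogenize)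
  also have "\<dots> = map ((*) c) (phi_map d [a, b] [s, t])" by (rule eq)
  also have "\<dots> = map ((*) (c * s ^ d)) (phi_map d [a, b] [1, u])"
    using d by (simp add: st phi_map_dehomogenize mult.assoc)
  also have "\<dots> = map ((*) (s' ^ d)) (phi_map d [k * a, k * b] [1, u])"
    using ks by (simp add: phi_map_scale_left o_def flip: mult.assoc)
  finally have "phi_map d [a', b'] [1, u'] = phi_map d [k * a, k * b] [1, u]"
    using y' by simp
  moreover have "k * a \<noteq> 0 \<or> k * b \<noteq> 0" using x k by simp
  ultimately have "u' = u" "a' = k * a" "b' = k * b"
    using phi_map_affine_eq_imp_eq[OF d _ u(1) u(2)] by blast+
  then show ?thesis
    using k y y' st by (auto intro: proj_eq_pairI[of "s' / s"] proj_eq_pairI[of k])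
qed

lemma phi_map_proportional_imp_proj_eq:
  assumes d: "d \<ge> 3" and x: "a \<noteq> 0 \<or> b \<noteq> 0" and y: "s \<noteq> 0 \<or> t \<noteq> 0"
    and x': "a' \<noteq> 0 \<or> b' \<noteq> 0" and y': "s' \<noteq> 0 \<or> t' \<noteq> 0" and c: "c \<noteq> 0"
    and eq: "phi_map d [a', b'] [s', t'] = map ((*) c) (phi_map d [a, b] [s, t])"
  shows "proj_eq [a, b] [a', b'] \<and> proj_eq [s, t] [s', t']"
proof -
  have coord: "phi_map d [a', b'] [s', t'] ! i = 0 \<longleftrightarrow> phi_map d [a, b] [s, t] ! i = 0"
    if "i < 5" for i
    using that c by (simp add: eq)
  have s': "s' = 0 \<longleftrightarrow> s = 0"
    using coord[of 0] coord[of 1]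
      phi_map_y0_eq_0_iff[OF d x, of s t] phi_map_y0_eq_0_iff[OF d x', of s' t'] by simp
  have t': "t' = 0 \<longleftrightarrow> t = 0"
    using coord[of 3] coord[of 4]
      phi_map_y1_eq_0_iff[OF d x, of t s] phi_map_y1_eq_0_iff[OF d x', of t' s'] by simp
  consider "s = 0" | "t = 0" | "s \<noteq> 0" "t \<noteq> 0" by blast
  then show ?thesis
  proof cases
    case 1
    with y y' s' have t: "t \<noteq> 0" "t' \<noteq> 0" by auto
    from eq 1 s' have "a' * t' ^ d = c * (a * t ^ d)" "b' * t' ^ d = c * (b * t ^ d)"
      by (simp_all add: phi_map_y0_zero[OF d])
    with c t have "proj_eq [a, b] [a', b']"
      using proj_eq_pair_if_scaled[of c "t ^ d" "t' ^ d"] by simp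
    moreover from 1 s' t have "proj_eq [s, t] [s', t']"
      by (intro proj_eq_pairI[of "t' / t"]) simp_all
    ultimately show ?thesis ..
  next
    case 2
    with y y' t' have s: "s \<noteq> 0" "s' \<noteq> 0" by auto
    from eq 2 t' have "a' * s' ^ d = c * (a * s ^ d)" "b' * s' ^ d = c * (b * s ^ d)"
      by (simp_all add: phi_map_y1_zero[OF d])
    with c s have "proj_eq [a, b] [a', b']"
      using proj_eq_pair_if_scaled[of c "s ^ d" "s' ^ d"] by simp
    moreover from 2 t' s have "proj_eq [s, t] [s', t']"
      by (intro proj_eq_pairI[of "s' / s"]) simp_all
    ultimately show ?thesis ..
  next
    case 3
    with s' t' show ?thesis by (intro phi_map_proportional_off_axes[OF d x c _ _ _ _ eq]) auto
  qed
qed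

lemma nonzero_vec_phi_map:
  assumes d: "d \<ge> 3" and x: "a \<noteq> 0 \<or> b \<noteq> 0" and y: "s \<noteq> 0 \<or> t \<noteq> 0"
  shows "nonzero_vec (phi_map d [a, b] [s, t])"
proof (rule ccontr)
  assume "\<not> nonzero_vec (phi_map d [a, b] [s, t])"
  then have "phi_map d [a, b] [s, t] ! i = 0" if "i < 5" for i
    using that nth_mem[of i "phi_map d [a, b] [s, t]"] by (auto simp: nonzero_vec_def)
  then have "s = 0" "t = 0"
    using phi_map_y0_eq_0_iff[OF d x, of s t] phi_map_y1_eq_0_iff[OF d x, of t s] by simp_all
  with y show False by simp
qed

theorem proposition4p3:
  fixes d :: nat
  assumes "d \<ge> 3"
  shows "(\<forall>x y. length x = 2 \<and> length y = 2 \<and> nonzero_vec x \<and> nonzero_vec y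
            \<longrightarrow> nonzero_vec (phi_map d x y))
       \<and> (\<forall>x y x' y'. length x = 2 \<and> length y = 2 \<and> length x' = 2 \<and> length y' = 2
            \<and> nonzero_vec x \<and> nonzero_vec y \<and> nonzero_vec x' \<and> nonzero_vec y'
            \<and> proj_eq (phi_map d x y) (phi_map d x' y')
            \<longrightarrow> proj_eq x x' \<and> proj_eq y y')"
proof (intro conjI allI impI)
  fix x y :: "complex list"
  assume "length x = 2 \<and> length y = 2 \<and> nonzero_vec x \<and> nonzero_vec y"
  then show "nonzero_vec (phi_map d x y)"
    using nonzero_vec_phi_map[OF assms] by (metis length_2_cases nonzero_vec_pair)
next
  fix x y x' y' :: "complex list"
  assume h: "length x = 2 \<and> length y = 2 \<and> length x' = 2 \<and> length y' = 2
            \<and> nonzero_vec x \<and> nonzero_vec y \<and> nonzero_vec x' \<and> nonzero_vec y'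
            \<and> proj_eq (phi_map d x y) (phi_map d x' y')"
  then obtain a b s t a' b' s' t'
    where xs: "x = [a, b]" "y = [s, t]" "x' = [a', b']" "y' = [s', t']"
    by (metis length_2_cases)
  from h have nz: "a \<noteq> 0 \<or> b \<noteq> 0" "s \<noteq> 0 \<or> t \<noteq> 0"
      "a' \<noteq> 0 \<or> b' \<noteq> 0" "s' \<noteq> 0 \<or> t' \<noteq> 0"
    by (simp_all add: xs)
  from h obtain c where "c \<noteq> 0" "phi_map d x' y' = map ((*) c) (phi_map d x y)"
    unfolding proj_eq_def by blast
  then have "proj_eq [a, b] [a', b'] \<and> proj_eq [s, t] [s', t']"
    unfolding xs by (rule phi_map_proportional_imp_proj_eq[OF assms nz])
  then show "proj_eq x x'" "proj_eq y y'" by (simp_all add: xs)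
qed

end
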